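(* Let $X$ be a complex Banach space with a closed linear subspace $M$, and let $u_1,\dots,u_n\in X$ with $\|u_k\|=1$. Set $V_0:=\{0\}$ and $V_k:=\operatorname{Span}\{u_1,\dots,u_k\}$ for $k=1,\dots,n$. Let $\delta_1,\dots,\delta_n$ be positive numbers with $\operatorname{dist}(u_k,M+V_{k-1})\ge\delta_k$ for $k=1,\dots,n$, and set $\Delta_k:=\frac{\prod_{i=k}^n\delta_i}{\prod_{i=k+1}^n(1+\delta_i)}$ for $k=1,\dots,n$. Then $\delta_k\le1$ and $\dim(M+V_k)/M=k$ for all $k$, and $$\operatorname{dist}\Big(\sum_{k=1}^n a_ku_k,M\Big)\ge\frac{\Delta_1}{n}\sum_{k=1}^n|a_k|\quad\text{for all }a_1,\dots,a_n\in\mathbb{C},\qquad \gamma(V_n,M)\ge\frac{\Delta_1}{n}.$$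
   Context: For linear subspaces $A,B$, $\gamma(A,B):=\inf_{u\in A\setminus B}\frac{\operatorname{dist}(u,B)}{\operatorname{dist}(u,A\cap B)}$ if $A\not\subset B$, and $\gamma(A,B):=1$ if $A\subset B$. *)

theory Defs
  imports "HOL-Analysis.Analysis"
begin

class complex_banach = banach +
  fixes scaleC :: "complex \<Rightarrow> 'a \<Rightarrow> 'a" (infixr \<open>*\<^sub>C\<close> 75)
  assumes scaleC_add_right: "a *\<^sub>C (x + y) = a *\<^sub>C x + a *\<^sub>C y"
    and scaleC_add_left: "(a + b) *\<^sub>C x = a *\<^sub>C x + b *\<^sub>C x"
    and scaleC_scaleC: "a *\<^sub>C (b *\<^sub>C x) = (a * b) *\<^sub>C x"
    and scaleC_one: "1 *\<^sub>C x = x"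
    and scaleC_of_real: "complex_of_real r *\<^sub>C x = r *\<^sub>R x"
    and norm_scaleC: "norm (a *\<^sub>C x) = cmod a * norm x"

abbreviation csubspace :: "'a::complex_banach set \<Rightarrow> bool" where
  "csubspace \<equiv> module.subspace scaleC"

abbreviation cspan :: "'a::complex_banach set \<Rightarrow> 'a set" where
  "cspan \<equiv> module.span scaleC"

definition msum :: "'a::ab_group_add set \<Rightarrow> 'a set \<Rightarrow> 'a set" where
  "msum A B = {x + y | x y. x \<in> A \<and> y \<in> B}"

text \<open>A finite set B is linearly independent modulo M (i.e. its image in X/M
is linearly independent and injective).\<close>
definition indep_mod :: "'a::complex_banach set \<Rightarrow> 'a set \<Rightarrow> bool" where
  "indep_mod M B \<longleftrightarrow> finite B \<and>
     (\<forall>c. (\<Sum>b\<in>B. c b *\<^sub>C b) \<in> M \<longrightarrow> (\<forall>b\<in>B. c b = 0))"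

text \<open>Dimension of the quotient space S/M (for M \<subseteq> S): the maximal size of a
subset of S that is linearly independent modulo M.\<close>
definition quot_dim :: "'a::complex_banach set \<Rightarrow> 'a set \<Rightarrow> nat" where
  "quot_dim S M = Sup {card B | B. B \<subseteq> S \<and> indep_mod M B}"

definition gamma :: "'a::complex_banach set \<Rightarrow> 'a set \<Rightarrow> real" where
  "gamma A B = (if A \<subseteq> B then 1
     else Inf {infdist u B / infdist u (A \<inter> B) | u. u \<in> A - B})"

end

(* Write x_j = a_1 u_1 + ... + a_j u_j and D_j = dist(x_j, M). Since x_j - a_j u_j lies in V_(j-1),
   the separation hypothesis gives |a_j| delta_j <= D_j, while D_(j-1) <= D_j + |a_j| because
   norm u_j = 1; together delta_j D_(j-1) <= (1 + delta_j) D_j, and telescoping from k to n gives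
   |a_k| Delta_k <= D_n. As delta_i <= 1, Delta_k increases with k, so averaging over k yields
   D_n >= Delta_1/n * sum |a_k|. This bound makes u_1, ..., u_n independent modulo M, which gives
   the quotient dimensions, and it gives V_n \<inter> M = {0} and dist(x, M) >= Delta_1/n * norm x on V_n,
   which bounds gamma(V_n, M). *)

theory Submission
  imports Defs
begin

interpretation cv: vector_space "scaleC :: complex \<Rightarrow> 'a::complex_banach \<Rightarrow> 'a"
  by unfold_locales (auto simp: scaleC_add_right scaleC_add_left scaleC_scaleC scaleC_one)

lemma msumI: "m \<in> M \<Longrightarrow> w \<in> W \<Longrightarrow> m + w \<in> msum M W"
  unfolding msum_def by blast

lemma subset_msum: "0 \<in> M \<Longrightarrow> W \<subseteq> msum M W"
  using msumI[of 0 M] by force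

lemma infdist_le_norm: "0 \<in> S \<Longrightarrow> infdist x S \<le> norm x"
  using infdist_le[of 0 S x] by simp

lemma infdist_msum_le_norm:
  "csubspace M \<Longrightarrow> csubspace W \<Longrightarrow> infdist x (msum M W) \<le> norm x"
  using msumI[of 0 M 0 W] by (intro infdist_le_norm) (auto dest: cv.subspace_0)

lemma cspan_image_atLeastAtMost:
  fixes u :: "nat \<Rightarrow> 'a::complex_banach"
  shows "cspan (u ` {1..k}) = range (\<lambda>a. \<Sum>i=1..k. a i *\<^sub>C u i)"
proof (induction k)
  case 0
  then show ?case by simp
next
  case (Suc k)
  have image_Suc: "u ` {1..Suc k} = insert (u (Suc k)) (u ` {1..k})"
    by (auto simp: atLeastAtMostSuc_conv)
  have sum_Suc: "(\<Sum>i=1..Suc k. a i *\<^sub>C u i) = (\<Sum>i=1..k. a i *\<^sub>C u i) + a (Suc k) *\<^sub>C u (Suc k)"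
    for a by simp
  show ?case
  proof (intro set_eqI iffI)
    fix x assume "x \<in> cspan (u ` {1..Suc k})"
    then obtain c a where ca: "x - c *\<^sub>C u (Suc k) = (\<Sum>i=1..k. a i *\<^sub>C u i)"
      unfolding image_Suc cv.span_insert Suc by auto
    have "(\<Sum>i=1..k. (a(Suc k := c)) i *\<^sub>C u i) = (\<Sum>i=1..k. a i *\<^sub>C u i)"
      by (rule sum.cong) auto
    then have "x = (\<Sum>i=1..Suc k. (a(Suc k := c)) i *\<^sub>C u i)"
      using ca sum_Suc[of "a(Suc k := c)"] by (simp add: algebra_simps)
    then show "x \<in> range (\<lambda>a. \<Sum>i=1..Suc k. a i *\<^sub>C u i)" by blast
  next
    fix x assume "x \<in> range (\<lambda>a. \<Sum>i=1..Suc k. a i *\<^sub>C u i)"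
    then obtain a where "x = (\<Sum>i=1..Suc k. a i *\<^sub>C u i)" by blast
    then have "x - a (Suc k) *\<^sub>C u (Suc k) = (\<Sum>i=1..k. a i *\<^sub>C u i)"
      using sum_Suc by simp
    then show "x \<in> cspan (u ` {1..Suc k})"
      unfolding image_Suc cv.span_insert Suc by auto
  qed
qed

lemma cmod_mult_infdist_msum_le:
  fixes M W :: "'a::complex_banach set"
  assumes M: "csubspace M" and W: "csubspace W" and y: "y \<in> W"
  shows "cmod c * infdist x (msum M W) \<le> infdist (y + c *\<^sub>C x) M"
proof (cases "c = 0")
  case True
  then show ?thesis by (simp add: infdist_nonneg)
next
  case False
  have M_ne: "M \<noteq> {}" using cv.subspace_0[OF M] by blast
  show ?thesis
    unfolding infdist_notempty[OF M_ne]
  proof (rule cINF_greatest[OF M_ne])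
    fix m assume m: "m \<in> M"
    define w where "w = inverse c *\<^sub>C m + (- inverse c) *\<^sub>C y"
    have w: "w \<in> msum M W"
      unfolding w_def using m y by (intro msumI cv.subspace_scale M W)
    have "c *\<^sub>C (x - w) = y + c *\<^sub>C x - m"
      using False by (simp add: w_def cv.scale_right_diff_distrib scaleC_add_right)
    then have "dist (y + c *\<^sub>C x) m = cmod c * dist x w"
      by (metis dist_norm norm_scaleC)
    then show "cmod c * infdist x (msum M W) \<le> dist (y + c *\<^sub>C x) m"
      using infdist_le[OF w, of x] by (simp add: mult_left_mono)
  qed
qed

lemma prod_telescoping_le:
  fixes D \<delta> :: "nat \<Rightarrow> real"
  assumes "k \<le> n"
    and nonneg: "\<And>i. k < i \<Longrightarrow> i \<le> n \<Longrightarrow> 0 \<le> \<delta> i"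
    and recurrence: "\<And>i. k < i \<Longrightarrow> i \<le> n \<Longrightarrow> D (i - 1) * \<delta> i \<le> (1 + \<delta> i) * D i"
  shows "D k * (\<Prod>i=k+1..n. \<delta> i) \<le> D n * (\<Prod>i=k+1..n. (1 + \<delta> i))"
  using \<open>k \<le> n\<close>
proof (induction k rule: inc_induct)
  case base
  then show ?case by simp
next
  case (step m)
  let ?P = "\<Prod>i=Suc m+1..n. \<delta> i" and ?Q = "\<Prod>i=Suc m+1..n. (1 + \<delta> i)"
  have P: "0 \<le> ?P" using nonneg step.hyps by (intro prod_nonneg) auto
  have "D m * (\<delta> (Suc m) * ?P) \<le> (1 + \<delta> (Suc m)) * D (Suc m) * ?P"
    using step.hyps P recurrence[of "Suc m"] by (simp add: mult.assoc[symmetric] mult_right_mono)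
  also have "\<dots> \<le> (1 + \<delta> (Suc m)) * (D n * ?Q)"
    using step.hyps step.IH nonneg[of "Suc m"] by (simp add: mult.assoc mult_left_mono)
  finally show ?case
    using step.hyps by (simp add: prod.atLeast_Suc_atMost ac_simps)
qed

definition Delta :: "(nat \<Rightarrow> real) \<Rightarrow> nat \<Rightarrow> nat \<Rightarrow> real" where
  "Delta \<delta> n k = (\<Prod>i=k..n. \<delta> i) / (\<Prod>i=k+1..n. (1 + \<delta> i))"

lemma Delta_pos: "(\<And>i. k \<le> i \<Longrightarrow> i \<le> n \<Longrightarrow> 0 < \<delta> i) \<Longrightarrow> 0 < Delta \<delta> n k"
  unfolding Delta_def by (intro divide_pos_pos prod_pos) (auto simp: add_pos_pos)

lemma Delta_le_1:
  assumes "\<And>i. k \<le> i \<Longrightarrow> i \<le> n \<Longrightarrow> 0 \<le> \<delta> i \<and> \<delta> i \<le> 1"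
  shows "Delta \<delta> n k \<le> 1"
proof -
  have "(\<Prod>i=k..n. \<delta> i) \<le> 1" using assms by (intro prod_le_1) auto
  moreover have "1 \<le> (\<Prod>i=k+1..n. (1 + \<delta> i))" using assms by (intro prod_ge_1) auto
  ultimately show ?thesis unfolding Delta_def by (simp add: divide_le_eq)
qed

lemma Delta_le_Suc:
  assumes "k < n" and "\<And>i. k \<le> i \<Longrightarrow> i \<le> n \<Longrightarrow> 0 \<le> \<delta> i" and "\<delta> k \<le> 1"
  shows "Delta \<delta> n k \<le> Delta \<delta> n (Suc k)"
proof -
  let ?P = "\<Prod>i=Suc k..n. \<delta> i" and ?Q = "\<Prod>i=Suc k+1..n. (1 + \<delta> i)"
  have P: "0 \<le> ?P" and Q: "0 < ?Q"
    using assms(2) by (auto intro!: prod_nonneg prod_pos simp: add_pos_nonneg)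
  have "\<delta> k * ?P / ((1 + \<delta> (Suc k)) * ?Q) \<le> ?P / ?Q"
    using assms P Q by (intro frac_le mult_left_le_one_le) (auto simp: mult_le_cancel_right1)
  then show ?thesis
    using assms(1) by (simp add: Delta_def prod.atLeast_Suc_atMost)
qed

lemma Delta_mono:
  assumes "\<And>i. k \<le> i \<Longrightarrow> i \<le> n \<Longrightarrow> 0 \<le> \<delta> i \<and> \<delta> i \<le> 1" and "k \<le> j" and "j \<le> n"
  shows "Delta \<delta> n k \<le> Delta \<delta> n j"
  using \<open>k \<le> j\<close> \<open>j \<le> n\<close>
proof (induction j rule: dec_induct)
  case base
  then show ?case by simp
next
  case (step j)
  then have "Delta \<delta> n j \<le> Delta \<delta> n (Suc j)"
    using assms(1) by (intro Delta_le_Suc) auto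
  with step show ?case by simp
qed

locale separated_units =
  fixes M :: "'a::complex_banach set" and u :: "nat \<Rightarrow> 'a" and n :: nat and \<delta> :: "nat \<Rightarrow> real"
  assumes M: "csubspace M"
    and unit: "\<forall>i\<in>{1..n}. norm (u i) = 1"
    and pos: "\<forall>i\<in>{1..n}. 0 < \<delta> i"
    and sep: "\<forall>i\<in>{1..n}. \<delta> i \<le> infdist (u i) (msum M (cspan (u ` {1..i-1})))"
begin

lemma separation_le_1: "\<forall>i\<in>{1..n}. \<delta> i \<le> 1"
  using sep unit infdist_msum_le_norm[OF M cv.subspace_span] by (metis order_trans)

lemma cmod_mult_Delta_le_infdist:
  assumes k: "k \<in> {1..n}"
  shows "cmod (a k) * Delta \<delta> n k \<le> infdist (\<Sum>i=1..n. a i *\<^sub>C u i) M"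
proof -
  define D where "D j = infdist (\<Sum>i=1..j. a i *\<^sub>C u i) M" for j
  have sum_last: "(\<Sum>i=1..j. a i *\<^sub>C u i) = (\<Sum>i=1..j-1. a i *\<^sub>C u i) + a j *\<^sub>C u j"
    if "1 \<le> j" for j
    using that by (cases j) auto
  have coeff: "cmod (a j) * \<delta> j \<le> D j" if j: "j \<in> {1..n}" for j
  proof -
    have "(\<Sum>i=1..j-1. a i *\<^sub>C u i) \<in> cspan (u ` {1..j-1})"
      using cspan_image_atLeastAtMost[of u "j - 1"] by blast
    then have "cmod (a j) * infdist (u j) (msum M (cspan (u ` {1..j-1})))
        \<le> infdist ((\<Sum>i=1..j-1. a i *\<^sub>C u i) + a j *\<^sub>C u j) M"
      by (rule cmod_mult_infdist_msum_le[OF M cv.subspace_span])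
    also have "\<dots> = D j"
      using j sum_last[of j] by (simp add: D_def)
    finally have "cmod (a j) * infdist (u j) (msum M (cspan (u ` {1..j-1}))) \<le> D j" .
    moreover have "cmod (a j) * \<delta> j \<le> cmod (a j) * infdist (u j) (msum M (cspan (u ` {1..j-1})))"
      using j sep by (simp add: mult_left_mono)
    ultimately show ?thesis by linarith
  qed
  have step: "D (j - 1) * \<delta> j \<le> (1 + \<delta> j) * D j" if j: "j \<in> {1..n}" for j
  proof -
    have "dist (\<Sum>i=1..j-1. a i *\<^sub>C u i) (\<Sum>i=1..j. a i *\<^sub>C u i) = cmod (a j)"
      using j unit sum_last[of j] by (simp add: dist_norm norm_scaleC norm_minus_commute)
    then have "D (j - 1) \<le> D j + cmod (a j)"
      unfolding D_def by (metis infdist_triangle)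
    then have "D (j - 1) * \<delta> j \<le> (D j + cmod (a j)) * \<delta> j"
      using j pos by (simp add: mult_right_mono)
    then show ?thesis
      using coeff[OF j] by (simp add: algebra_simps)
  qed
  let ?P = "\<Prod>i=k+1..n. \<delta> i" and ?Q = "\<Prod>i=k+1..n. (1 + \<delta> i)"
  have P: "0 \<le> ?P" and Q: "0 < ?Q"
    using pos k by (auto intro!: prod_nonneg prod_pos simp: less_imp_le add_pos_pos)
  have "cmod (a k) * \<delta> k * ?P \<le> D k * ?P"
    using coeff[OF k] P by (rule mult_right_mono)
  also have "\<dots> \<le> D n * ?Q"
    using k pos step by (intro prod_telescoping_le) (auto simp: less_imp_le)
  finally have "cmod (a k) * (\<delta> k * ?P / ?Q) \<le> D n"
    using Q by (simp add: pos_divide_le_eq mult.assoc)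
  then show ?thesis
    using k by (simp add: Delta_def D_def prod.atLeast_Suc_atMost)
qed

lemma Delta_div_mult_sum_le_infdist:
  shows "Delta \<delta> n 1 / n * (\<Sum>k=1..n. cmod (a k)) \<le> infdist (\<Sum>k=1..n. a k *\<^sub>C u k) M"
proof -
  let ?d = "infdist (\<Sum>k=1..n. a k *\<^sub>C u k) M"
  have "Delta \<delta> n 1 * cmod (a k) \<le> ?d" if k: "k \<in> {1..n}" for k
  proof -
    have "Delta \<delta> n 1 \<le> Delta \<delta> n k"
      using k pos separation_le_1 by (intro Delta_mono) (auto simp: less_imp_le)
    then have "Delta \<delta> n 1 * cmod (a k) \<le> cmod (a k) * Delta \<delta> n k"
      by (simp add: mult.commute mult_left_mono)
    also have "\<dots> \<le> ?d"
      using cmod_mult_Delta_le_infdist[OF k] .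
    finally show ?thesis .
  qed
  then have "Delta \<delta> n 1 * (\<Sum>k=1..n. cmod (a k)) \<le> n * ?d"
    using sum_mono[of "{1..n}" "\<lambda>k. Delta \<delta> n 1 * cmod (a k)" "\<lambda>_. ?d"]
    by (simp add: sum_distrib_left)
  then show ?thesis
    by (cases "n = 0") (simp_all add: infdist_nonneg field_simps)
qed

end

lemma coeffs_zero_if_mult_sum_le_infdist:
  fixes M :: "'a::complex_banach set" and n :: nat
  assumes "0 < c" and bound: "c * (\<Sum>k=1..n. cmod (a k)) \<le> infdist (\<Sum>k=1..n. a k *\<^sub>C u k) M"
    and "(\<Sum>k=1..n. a k *\<^sub>C u k) \<in> M"
  shows "\<forall>k\<in>{1..n}. a k = 0"
proof -
  have "c * (\<Sum>k=1..n. cmod (a k)) \<le> 0"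
    using bound assms(3) by (simp add: infdist_zero)
  then have "(\<Sum>k=1..n. cmod (a k)) = 0"
    using \<open>0 < c\<close> by (simp add: mult_le_0_iff sum_nonneg order_antisym)
  then show ?thesis by (subst (asm) sum_nonneg_eq_0_iff) auto
qed

lemma indep_mod_card_le:
  fixes M :: "'a::complex_banach set"
  assumes M: "csubspace M" and S: "finite S" and B: "B \<subseteq> msum M (cspan S)" and indep: "indep_mod M B"
  shows "card B \<le> card S"
proof -
  have finB: "finite B" using indep by (simp add: indep_mod_def)
  obtain f where f: "\<And>b. b \<in> B \<Longrightarrow> f b \<in> cspan S \<and> b - f b \<in> M"
  proof -
    have "\<forall>b\<in>B. \<exists>v. v \<in> cspan S \<and> b - v \<in> M"
      using B unfolding msum_def by force
    then show ?thesis using that by metis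
  qed
  have scalars_zero: "\<forall>b\<in>B. c b = 0" if c: "(\<Sum>b\<in>B. c b *\<^sub>C f b) = 0" for c
  proof -
    have "(\<Sum>b\<in>B. c b *\<^sub>C b) = (\<Sum>b\<in>B. c b *\<^sub>C (b - f b)) + (\<Sum>b\<in>B. c b *\<^sub>C f b)"
      by (simp add: sum.distrib[symmetric] cv.scale_right_diff_distrib)
    also have "\<dots> \<in> M"
      using c f by (simp, intro cv.subspace_sum[OF M] cv.subspace_scale[OF M]) auto
    finally show ?thesis using indep unfolding indep_mod_def by blast
  qed
  have inj: "inj_on f B"
  proof (rule inj_onI, rule ccontr)
    fix b1 b2 assume b: "b1 \<in> B" "b2 \<in> B" "f b1 = f b2" "b1 \<noteq> b2"
    define c where "c b = (if b = b1 then 1 else 0) - (if b = b2 then 1 else (0::complex))" for b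
    have "(\<Sum>b\<in>B. c b *\<^sub>C f b) = (\<Sum>b\<in>B. c b *\<^sub>C f b1)"
      using b by (intro sum.cong) (auto simp: c_def)
    also have "\<dots> = (\<Sum>b\<in>B. c b) *\<^sub>C f b1"
      by (simp add: cv.scale_sum_left)
    also have "(\<Sum>b\<in>B. c b) = 0"
      using b finB by (simp add: c_def sum_subtractf)
    finally have "c b1 = 0"
      using scalars_zero b(1) by (simp add: cv.scale_zero_left)
    then show False using b by (simp add: c_def)
  qed
  have "cv.independent (f ` B)"
  proof (rule cv.independent_if_scalars_zero)
    fix g x assume g: "(\<Sum>x\<in>f ` B. g x *\<^sub>C x) = 0" and x: "x \<in> f ` B"
    have "(\<Sum>b\<in>B. g (f b) *\<^sub>C f b) = 0"
      using g sum.reindex[OF inj, of "\<lambda>x. g x *\<^sub>C x"] by simp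
    then show "g x = 0" using x scalars_zero[of "\<lambda>b. g (f b)"] by auto
  qed (use finB in simp)
  moreover have "f ` B \<subseteq> cspan S" using f by auto
  ultimately have "card (f ` B) \<le> card S"
    using cv.independent_span_bound[OF S] by blast
  then show ?thesis using card_image[OF inj] by simp
qed

lemma quot_dim_msum_cspan:
  fixes M :: "'a::complex_banach set"
  assumes M: "csubspace M" and indep: "indep_mod M S"
  shows "quot_dim (msum M (cspan S)) M = card S"
  unfolding quot_dim_def
proof (rule cSup_eq_maximum)
  have "S \<subseteq> msum M (cspan S)"
    using subset_msum[OF cv.subspace_0[OF M]] cv.span_superset by blast
  then show "card S \<in> {card B |B. B \<subseteq> msum M (cspan S) \<and> indep_mod M B}"
    using indep by blast
next
  have "finite S" using indep by (simp add: indep_mod_def)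
  then show "\<And>x. x \<in> {card B |B. B \<subseteq> msum M (cspan S) \<and> indep_mod M B} \<Longrightarrow> x \<le> card S"
    using indep_mod_card_le[OF M] by blast
qed

lemma indep_mod_image_atLeastAtMost:
  fixes M :: "'a::complex_banach set" and u :: "nat \<Rightarrow> 'a"
  assumes M: "csubspace M"
    and indep: "\<forall>a. (\<Sum>i=1..k. a i *\<^sub>C u i) \<in> M \<longrightarrow> (\<forall>i\<in>{1..k}. a i = 0)"
  shows "inj_on u {1..k}" and "indep_mod M (u ` {1..k})"
proof -
  show inj: "inj_on u {1..k}"
  proof (rule inj_onI, rule ccontr)
    fix i j assume ij: "i \<in> {1..k}" "j \<in> {1..k}" "u i = u j" "i \<noteq> j"
    define a where "a l = (if l = i then 1 else 0) - (if l = j then 1 else (0::complex))" for l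
    have "(\<Sum>l=1..k. a l *\<^sub>C u l) = (\<Sum>l=1..k. a l *\<^sub>C u i)"
      using ij by (intro sum.cong) (auto simp: a_def)
    also have "\<dots> = (\<Sum>l=1..k. a l) *\<^sub>C u i"
      by (simp add: cv.scale_sum_left)
    also have "(\<Sum>l=1..k. a l) = 0"
      using ij by (simp add: a_def sum_subtractf)
    finally have "a i = 0"
      using indep cv.subspace_0[OF M] ij(1) by simp
    then show False using ij by (simp add: a_def)
  qed
  show "indep_mod M (u ` {1..k})"
    unfolding indep_mod_def
  proof (intro conjI allI impI ballI)
    fix c b assume c: "(\<Sum>b\<in>u ` {1..k}. c b *\<^sub>C b) \<in> M" and b: "b \<in> u ` {1..k}"
    have "(\<Sum>i=1..k. c (u i) *\<^sub>C u i) \<in> M"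
      using c sum.reindex[OF inj, of "\<lambda>b. c b *\<^sub>C b"] by simp
    then show "c b = 0" using indep b by auto
  qed simp
qed

lemma quot_dim_msum_cspan_prefix:
  fixes M :: "'a::complex_banach set" and u :: "nat \<Rightarrow> 'a"
  assumes M: "csubspace M"
    and indep: "\<forall>a. (\<Sum>i=1..n. a i *\<^sub>C u i) \<in> M \<longrightarrow> (\<forall>i\<in>{1..n}. a i = 0)"
    and "k \<le> n"
  shows "quot_dim (msum M (cspan (u ` {1..k}))) M = k"
proof -
  have "\<forall>i\<in>{1..k}. a i = 0" if a: "(\<Sum>i=1..k. a i *\<^sub>C u i) \<in> M" for a
  proof -
    define b where "b i = (if i \<le> k then a i else 0)" for i
    have "(\<Sum>i=1..n. b i *\<^sub>C u i) = (\<Sum>i=1..k. b i *\<^sub>C u i)"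
      using \<open>k \<le> n\<close> by (intro sum.mono_neutral_right) (auto simp: b_def)
    also have "\<dots> = (\<Sum>i=1..k. a i *\<^sub>C u i)"
      by (intro sum.cong) (auto simp: b_def)
    finally have "(\<Sum>i=1..n. b i *\<^sub>C u i) \<in> M"
      using a by simp
    then have "\<forall>i\<in>{1..n}. b i = 0"
      using indep by blast
    then show ?thesis using \<open>k \<le> n\<close> unfolding b_def by (metis atLeastAtMost_iff order_trans)
  qed
  then have "inj_on u {1..k}" and "indep_mod M (u ` {1..k})"
    using indep_mod_image_atLeastAtMost[OF M] by blast+
  then show ?thesis
    by (simp add: quot_dim_msum_cspan[OF M] card_image)
qed

(* 0 \<in> A is needed: for A \<inter> B = {} the quotients in gamma would be divisions by infdist x {} = 0. *)
lemma gamma_ge: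
  fixes A B :: "'a::complex_banach set"
  assumes "0 \<in> A" "0 \<in> B" "0 < c" "c \<le> 1"
    and bound: "\<forall>x\<in>A. c * norm x \<le> infdist x B"
  shows "c \<le> gamma A B"
proof (cases "A \<subseteq> B")
  case True
  then show ?thesis by (simp add: gamma_def assms)
next
  case False
  have "A \<inter> B = {0}"
    using assms bound by (auto simp: infdist_zero mult_le_0_iff)
  then have "c \<le> infdist x B / infdist x (A \<inter> B)" if "x \<in> A - B" for x
    using that bound assms(2) by (auto simp: pos_le_divide_eq)
  with False show ?thesis
    unfolding gamma_def by (auto intro!: cInf_greatest)
qed

lemma mult_norm_le_infdist_cspan:
  fixes M :: "'a::complex_banach set" and u :: "nat \<Rightarrow> 'a"
  assumes unit: "\<forall>i\<in>{1..n}. norm (u i) = 1" and "0 \<le> c"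
    and bound: "\<forall>a. c * (\<Sum>i=1..n. cmod (a i)) \<le> infdist (\<Sum>i=1..n. a i *\<^sub>C u i) M"
    and x: "x \<in> cspan (u ` {1..n})"
  shows "c * norm x \<le> infdist x M"
proof -
  obtain a where xa: "x = (\<Sum>i=1..n. a i *\<^sub>C u i)"
    using x cspan_image_atLeastAtMost[of u n] by auto
  have "norm x \<le> (\<Sum>i=1..n. cmod (a i))"
    unfolding xa using norm_sum[of "\<lambda>i. a i *\<^sub>C u i" "{1..n}"] unit by (simp add: norm_scaleC)
  then show ?thesis
    using bound xa \<open>0 \<le> c\<close> by (metis mult_left_mono order_trans)
qed

theorem lemma2p8:
  fixes M :: "'a::complex_banach set"
    and u :: "nat \<Rightarrow> 'a"
    and \<delta> :: "nat \<Rightarrow> real"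
    and n :: nat
    and V :: "nat \<Rightarrow> 'a set"
    and \<Delta> :: "nat \<Rightarrow> real"
  assumes "closed M" and "csubspace M"
    and "n \<ge> 1"
    and "\<forall>k\<in>{1..n}. norm (u k) = 1"
    and V_def: "\<forall>k. V k = cspan (u ` {1..k})"
    and "\<forall>k\<in>{1..n}. \<delta> k > 0"
    and "\<forall>k\<in>{1..n}. infdist (u k) (msum M (V (k - 1))) \<ge> \<delta> k"
    and \<Delta>_def: "\<forall>k. \<Delta> k = (\<Prod>i=k..n. \<delta> i) / (\<Prod>i=k+1..n. (1 + \<delta> i))"
  shows "(\<forall>k\<in>{1..n}. \<delta> k \<le> 1)
    \<and> (\<forall>k\<in>{0..n}. quot_dim (msum M (V k)) M = k)
    \<and> (\<forall>a :: nat \<Rightarrow> complex.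
          infdist (\<Sum>k=1..n. a k *\<^sub>C u k) M \<ge> \<Delta> 1 / real n * (\<Sum>k=1..n. cmod (a k)))
    \<and> gamma (V n) M \<ge> \<Delta> 1 / real n"
proof -
  interpret separated_units M u n \<delta>
    using assms V_def by unfold_locales auto
  define c where "c = \<Delta> 1 / real n"
  have c: "c = Delta \<delta> n 1 / n"
    using \<Delta>_def by (simp add: c_def Delta_def)
  have c_pos: "0 < c" and c_le_1: "c \<le> 1"
    using Delta_pos[of 1 n \<delta>] Delta_le_1[of 1 n \<delta>] pos separation_le_1 \<open>n \<ge> 1\<close>
    by (auto simp: c divide_le_eq less_imp_le)
  have bound: "\<forall>a. c * (\<Sum>k=1..n. cmod (a k)) \<le> infdist (\<Sum>k=1..n. a k *\<^sub>C u k) M"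
    using Delta_div_mult_sum_le_infdist c by simp
  have indep: "\<forall>a. (\<Sum>k=1..n. a k *\<^sub>C u k) \<in> M \<longrightarrow> (\<forall>k\<in>{1..n}. a k = 0)"
    using coeffs_zero_if_mult_sum_le_infdist[OF c_pos] bound by blast
  have "\<forall>k\<in>{0..n}. quot_dim (msum M (V k)) M = k"
    using quot_dim_msum_cspan_prefix[OF M indep] V_def by simp
  moreover have "c \<le> gamma (V n) M"
    using V_def cv.span_zero cv.subspace_0[OF M] c_pos c_le_1
      mult_norm_le_infdist_cspan[OF unit less_imp_le[OF c_pos] bound]
    by (intro gamma_ge) auto
  ultimately show ?thesis
    using separation_le_1 bound by (simp add: c_def)
qed

end
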